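(* Let $\mathcal{H}$ be a complex separable Hilbert space and $\mathcal{E}(\mathcal{H})$ its set of effects. The function $\mathcal{S}_0:\mathcal{E}(\mathcal{H})\to\mathbb{R}$ defined by $$\mathcal{S}_0(A):=\|A\|\,\|I-A\|-\|A(I-A)\|$$ is a sharpness measure.
   Context: An effect is a selfadjoint bounded operator $A$ on $\mathcal{H}$ with $\mathbb{O}\le A\le I$; $\mathcal{E}(\mathcal{H})$ denotes the set of effects and $A':=I-A$. An effect is trivial if $A=\lambda I$ for some $\lambda\in[0,1]$; a nontrivial projection is a projection $P=P^2=P^*$ with $P\neq \mathbb{O},I$. Norms are operator norms. A function $\mathcal{S}:\mathcal{E}(\mathcal{H})\to\mathbb{R}$ is called a sharpness measure if: (S1) $0\le\mathcal{S}(A)\le1$ for all effects $A$; (S2) $\mathcal{S}(A)=0$ iff $A$ is a trivial effect; (S3) $\mathcal{S}(A)=1$ iff $A$ is a nontrivial projection; (S4) $\mathcal{S}(A')=\mathcal{S}(A)$; (S5) $\mathcal{S}(CAC^{-1})=\mathcal{S}(A)$ for every invertible bounded operator $C$ such that $CAC^{-1}$ is an effect; (S6) $A\mapsto\mathcal{S}(A)$ is continuous with respect to the operator norm. *)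

theory Defs
  imports "HOL-Analysis.Analysis"
begin

text \<open>A complex Hilbert space: a real Banach space type 'a equipped with a complex
 scalar multiplication extending the real one and a complex inner product
 (linear in the second argument) inducing the norm.\<close>
definition complex_hilbert :: "(complex \<Rightarrow> 'a::banach \<Rightarrow> 'a) \<Rightarrow> ('a \<Rightarrow> 'a \<Rightarrow> complex) \<Rightarrow> bool" where
  "complex_hilbert cscale cinner \<longleftrightarrow>
     (\<forall>x. cscale 1 x = x) \<and>
     (\<forall>a b x. cscale a (cscale b x) = cscale (a * b) x) \<and>
     (\<forall>a x y. cscale a (x + y) = cscale a x + cscale a y) \<and>
     (\<forall>a b x. cscale (a + b) x = cscale a x + cscale b x) \<and>
     (\<forall>r x. cscale (complex_of_real r) x = scaleR r x) \<and>
     (\<forall>x y. cinner x y = cnj (cinner y x)) \<and>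
     (\<forall>x y z. cinner x (y + z) = cinner x y + cinner x z) \<and>
     (\<forall>a x y. cinner x (cscale a y) = a * cinner x y) \<and>
     (\<forall>x. cinner x x = complex_of_real ((norm x)\<^sup>2))"

definition separable_space :: "'a::metric_space itself \<Rightarrow> bool" where
  "separable_space _ \<longleftrightarrow> (\<exists>D::'a set. countable D \<and> closure D = UNIV)"

definition bounded_op :: "(complex \<Rightarrow> 'a::banach \<Rightarrow> 'a) \<Rightarrow> ('a \<Rightarrow> 'a) \<Rightarrow> bool" where
  "bounded_op cscale T \<longleftrightarrow> bounded_linear T \<and> (\<forall>c x. T (cscale c x) = cscale c (T x))"

definition selfadjoint_op :: "(complex \<Rightarrow> 'a::banach \<Rightarrow> 'a) \<Rightarrow> ('a \<Rightarrow> 'a \<Rightarrow> complex) \<Rightarrow> ('a \<Rightarrow> 'a) \<Rightarrow> bool" where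
  "selfadjoint_op cscale cinner T \<longleftrightarrow> bounded_op cscale T \<and> (\<forall>x y. cinner (T x) y = cinner x (T y))"

definition effects :: "(complex \<Rightarrow> 'a::banach \<Rightarrow> 'a) \<Rightarrow> ('a \<Rightarrow> 'a \<Rightarrow> complex) \<Rightarrow> ('a \<Rightarrow> 'a) set" where
  "effects cscale cinner = {A. selfadjoint_op cscale cinner A \<and>
      (\<forall>x. 0 \<le> Re (cinner x (A x)) \<and> Re (cinner x (A x)) \<le> Re (cinner x x))}"

definition trivial_effect :: "('a::banach \<Rightarrow> 'a) \<Rightarrow> bool" where
  "trivial_effect A \<longleftrightarrow> (\<exists>l::real. 0 \<le> l \<and> l \<le> 1 \<and> A = (\<lambda>x. scaleR l x))"

definition nontrivial_projection :: "(complex \<Rightarrow> 'a::banach \<Rightarrow> 'a) \<Rightarrow> ('a \<Rightarrow> 'a \<Rightarrow> complex) \<Rightarrow> ('a \<Rightarrow> 'a) \<Rightarrow> bool" where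
  "nontrivial_projection cscale cinner P \<longleftrightarrow>
     selfadjoint_op cscale cinner P \<and> P \<circ> P = P \<and> P \<noteq> (\<lambda>x. 0) \<and> P \<noteq> id"

definition invertible_op :: "(complex \<Rightarrow> 'a::banach \<Rightarrow> 'a) \<Rightarrow> ('a \<Rightarrow> 'a) \<Rightarrow> ('a \<Rightarrow> 'a) \<Rightarrow> bool" where
  "invertible_op cscale C D \<longleftrightarrow> bounded_op cscale C \<and> bounded_op cscale D \<and> C \<circ> D = id \<and> D \<circ> C = id"

text \<open>Sharpness measure, conditions (S1)--(S6). A' = I - A; C A C^{-1} = C \<circ> A \<circ> D.\<close>
definition sharpness_measure :: "(complex \<Rightarrow> 'a::banach \<Rightarrow> 'a) \<Rightarrow> ('a \<Rightarrow> 'a \<Rightarrow> complex) \<Rightarrow> (('a \<Rightarrow> 'a) \<Rightarrow> real) \<Rightarrow> bool" where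
  "sharpness_measure cscale cinner S \<longleftrightarrow>
     (\<forall>A\<in>effects cscale cinner. 0 \<le> S A \<and> S A \<le> 1) \<and>
     (\<forall>A\<in>effects cscale cinner. S A = 0 \<longleftrightarrow> trivial_effect A) \<and>
     (\<forall>A\<in>effects cscale cinner. S A = 1 \<longleftrightarrow> nontrivial_projection cscale cinner A) \<and>
     (\<forall>A\<in>effects cscale cinner. S (\<lambda>x. x - A x) = S A) \<and>
     (\<forall>A\<in>effects cscale cinner. \<forall>C D. invertible_op cscale C D \<and> C \<circ> A \<circ> D \<in> effects cscale cinner
          \<longrightarrow> S (C \<circ> A \<circ> D) = S A) \<and>
     (\<forall>A\<in>effects cscale cinner. \<forall>e>0. \<exists>d>0. \<forall>B\<in>effects cscale cinner.
          onorm (\<lambda>x. B x - A x) < d \<longrightarrow> \<bar>S B - S A\<bar> < e)"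

definition S0 :: "('a::banach \<Rightarrow> 'a) \<Rightarrow> real" where
  "S0 A = onorm A * onorm (\<lambda>x. x - A x) - onorm (\<lambda>x. A (x - A x))"

end

theory Submission
  imports Defs
begin

text \<open>Write \<open>a = \<parallel>A\<parallel>\<close>, \<open>b = \<parallel>I - A\<parallel>\<close> and \<open>c = \<parallel>A (I - A)\<parallel>\<close>, so that \<open>S\<^sub>0(A) = a b - c\<close> with
  \<open>0 \<le> c \<le> a b \<le> 1\<close>. The numerical range of an effect \<open>A\<close> lies in \<open>[1 - b, a]\<close>. If \<open>a + b \<le> 1\<close> this
  forces \<open>A = a I\<close>; otherwise the form of \<open>A (I - A)\<close>, bounded by
  \<open>t - t\<^sup>2\<close> on that interval, stays uniformly below \<open>a b\<close>, so \<open>c < a b\<close>. The value \<open>1\<close> forces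
  \<open>a = b = 1\<close> and \<open>A (I - A) = 0\<close>. Similarity invariance holds because \<open>A\<close>, \<open>I - A\<close> and
  \<open>A (I - A)\<close> are conjugated together, and the norm of a selfadjoint operator is its spectral radius
  \<open>lim \<parallel>X^(2^k)\<parallel>^(1/2^k)\<close>, a similarity invariant. Finally \<open>S\<^sub>0\<close> is Lipschitz with constant 5.\<close>

section \<open>Elementary inequalities\<close>

lemma nonneg_quadratic_imp_discrim_le:
  fixes a b c :: real
  assumes "\<And>t. 0 \<le> a + 2 * b * t + c * t\<^sup>2" "0 \<le> a" "0 \<le> c"
  shows "b\<^sup>2 \<le> a * c"
proof (cases "c = 0")
  case True
  show ?thesis
  proof (rule ccontr)
    assume "\<not> ?thesis"
    then have "b \<noteq> 0" using True by simp
    have "0 \<le> a + 2 * b * (- (a + 1) / (2 * b)) + c * (- (a + 1) / (2 * b))\<^sup>2" by (rule assms(1))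
    also have "\<dots> = -1" using True \<open>b \<noteq> 0\<close> by (simp add: field_simps)
    finally show False by simp
  qed
next
  case False
  then have c: "c > 0" using assms by simp
  have "0 \<le> a + 2 * b * (- b / c) + c * (- b / c)\<^sup>2" by (rule assms(1))
  also have "\<dots> = a - b\<^sup>2 / c" using c by (simp add: field_simps power2_eq_square)
  finally show ?thesis using c by (simp add: field_simps)
qed

lemma bilinear_form_Cauchy_Schwarz:
  fixes p :: "'a::real_vector \<Rightarrow> 'a \<Rightarrow> real"
  assumes add: "\<And>x y z. p x (y + z) = p x y + p x z"
    and scale: "\<And>r x y. p x (r *\<^sub>R y) = r * p x y"
    and sym: "\<And>x y. p x y = p y x"
    and pos: "\<And>x. 0 \<le> p x x"
  shows "(p x y)\<^sup>2 \<le> p x x * p y y"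
proof -
  have add_left: "p (y + z) x = p y x + p z x" for x y z using add sym by metis
  have scale_left: "p (r *\<^sub>R y) x = r * p y x" for r x y using scale sym by metis
  have "0 \<le> p x x + 2 * p x y * t + p y y * t\<^sup>2" for t
  proof -
    have "0 \<le> p (x + t *\<^sub>R y) (x + t *\<^sub>R y)" by (rule pos)
    also have "\<dots> = p x x + 2 * p x y * t + p y y * t\<^sup>2"
      by (simp add: add add_left scale scale_left sym[of y x] power2_eq_square algebra_simps)
    finally show ?thesis .
  qed
  then show ?thesis using nonneg_quadratic_imp_discrim_le pos by blast
qed

lemma le_if_pow_two_pow_le:
  fixes x y K :: real
  assumes "0 \<le> x" and le: "\<And>k. y ^ (2 ^ k) \<le> K * x ^ (2 ^ k)"
  shows "y \<le> x"
proof (rule ccontr)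
  assume "\<not> y \<le> x"
  then have gt: "x < y" by simp
  show False
  proof (cases "x = 0")
    case True
    then show False using le[of 0] gt by simp
  next
    case False
    then have x: "0 < x" using assms(1) by simp
    define r where "r = y / x"
    have r: "1 < r" using gt x by (simp add: r_def)
    obtain n where n: "K < r ^ n" using real_arch_pow[OF r] by blast
    have "r ^ n \<le> r ^ (2 ^ n)" using r by (intro power_increasing) (auto intro: less_imp_le less_exp)
    also have "\<dots> = y ^ (2 ^ n) / x ^ (2 ^ n)" by (simp add: r_def power_divide)
    also have "\<dots> \<le> K" using le[of n] x by (simp add: divide_le_eq)
    finally show False using n by simp
  qed
qed

lemma funpow_conjugate:
  assumes "C \<circ> D = id" "D \<circ> C = id"
  shows "(C \<circ> X \<circ> D) ^^ n = C \<circ> X ^^ n \<circ> D"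
proof (induction n)
  case 0
  show ?case using assms(1) by simp
next
  case (Suc n)
  have "(C \<circ> X \<circ> D) ^^ Suc n = (C \<circ> X \<circ> D) \<circ> (C \<circ> X ^^ n \<circ> D)"
    by (simp only: funpow.simps(2) Suc.IH)
  also have "\<dots> = C \<circ> X \<circ> (D \<circ> C) \<circ> X ^^ n \<circ> D" by (simp add: comp_assoc)
  also have "\<dots> = C \<circ> X ^^ Suc n \<circ> D" using assms by (simp add: comp_assoc)
  finally show ?case .
qed

text \<open>On \<open>[m, M]\<close> the parabola \<open>t - t\<^sup>2\<close> stays uniformly below \<open>M (1 - m)\<close>, because
  \<open>M (1 - m) - (t - t\<^sup>2) = (M - t) (1 - m) + t (t - m)\<close> and the two terms cannot vanish together.\<close>

lemma parabola_uniform_gap: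
  fixes m M :: real
  assumes "m < M" "0 \<le> m" "M \<le> 1"
  obtains d where "d > 0" "\<And>t. m \<le> t \<Longrightarrow> t \<le> M \<Longrightarrow> t - t\<^sup>2 \<le> M * (1 - m) - d"
proof
  define d where "d = min ((M - m) * (1 - m) / 2) (M * (M - m) / 4)"
  show "d > 0" using assms by (simp add: d_def)
  fix t assume t: "m \<le> t" "t \<le> M"
  have eq: "M * (1 - m) - (t - t\<^sup>2) = (M - t) * (1 - m) + t * (t - m)"
    by (simp add: algebra_simps power2_eq_square)
  show "t - t\<^sup>2 \<le> M * (1 - m) - d"
  proof (cases "t \<le> (m + M) / 2")
    case True
    have "(M - m) / 2 * (1 - m) \<le> (M - t) * (1 - m)"
      using True assms by (intro mult_right_mono) auto
    moreover have "0 \<le> t * (t - m)" using t assms by simp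
    moreover have "d \<le> (M - m) * (1 - m) / 2" by (simp add: d_def)
    ultimately show ?thesis using eq by (simp add: field_simps)
  next
    case False
    have "M / 2 * ((M - m) / 2) \<le> t * (t - m)"
      using False assms by (intro mult_mono) auto
    moreover have "0 \<le> (M - t) * (1 - m)" using t assms by simp
    moreover have "d \<le> M * (M - m) / 4" by (simp add: d_def)
    ultimately show ?thesis using eq by (simp add: field_simps)
  qed
qed

section \<open>Operator norm estimates\<close>

lemma abs_onorm_diff_le:
  assumes f: "bounded_linear f" and g: "bounded_linear g"
  shows "\<bar>onorm f - onorm g\<bar> \<le> onorm (\<lambda>x. f x - g x)"
proof -
  have fg: "bounded_linear (\<lambda>x. f x - g x)" by (rule bounded_linear_sub[OF f g])
  have gf: "bounded_linear (\<lambda>x. g x - f x)" by (rule bounded_linear_sub[OF g f])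
  have "onorm f = onorm (\<lambda>x. g x + (f x - g x))" by simp
  also have "\<dots> \<le> onorm g + onorm (\<lambda>x. f x - g x)" by (rule onorm_triangle[OF g fg])
  finally have "onorm f - onorm g \<le> onorm (\<lambda>x. f x - g x)" by simp
  moreover have "onorm (\<lambda>x. g x - f x) = onorm (\<lambda>x. f x - g x)"
    using onorm_neg[of "\<lambda>x. f x - g x"] by simp
  moreover have "onorm g = onorm (\<lambda>x. f x + (g x - f x))" by simp
  moreover have "\<dots> \<le> onorm f + onorm (\<lambda>x. g x - f x)" by (rule onorm_triangle[OF f gf])
  ultimately show ?thesis by linarith
qed

lemma onorm_idempotent_ge_one:
  assumes "bounded_linear P" "P \<circ> P = P" "P \<noteq> (\<lambda>x. 0)"
  shows "1 \<le> onorm P"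
proof -
  obtain x where x: "P x \<noteq> 0" using assms(3) by auto
  have "norm (P (P x)) \<le> onorm P * norm (P x)" using onorm[OF assms(1)] by simp
  moreover have "P (P x) = P x" using fun_cong[OF assms(2), of x] by simp
  ultimately show ?thesis using x by simp
qed

lemma onorm_compl_compose_diff_le:
  fixes A B :: "'a::real_normed_vector \<Rightarrow> 'a"
  assumes A: "bounded_linear A" "onorm A \<le> 1" and B: "bounded_linear B" "onorm B \<le> 1"
  shows "onorm (\<lambda>x. B (x - B x) - A (x - A x)) \<le> 3 * onorm (\<lambda>x. B x - A x)"
proof (rule onorm_bound)
  let ?E = "\<lambda>x. B x - A x"
  let ?d = "onorm ?E"
  have E: "bounded_linear ?E" by (rule bounded_linear_sub[OF B(1) A(1)])
  show "0 \<le> 3 * ?d" using onorm_pos_le[OF E] by simp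
  fix x
  have "B (x - B x) - A (x - A x) = ?E x - B (?E x) - ?E (A x)"
    using A(1) B(1) by (simp add: linear_simps algebra_simps)
  also have "norm \<dots> \<le> norm (?E x) + norm (B (?E x)) + norm (?E (A x))"
    by (meson norm_triangle_ineq4 norm_triangle_le_diff order_trans add_mono order_refl)
  also have "\<dots> \<le> ?d * norm x + ?d * norm x + ?d * norm x"
  proof (intro add_mono)
    show Ex: "norm (?E x) \<le> ?d * norm x" by (rule onorm[OF E])
    have "norm (B (?E x)) \<le> onorm B * norm (?E x)" by (rule onorm[OF B(1)])
    also have "\<dots> \<le> norm (?E x)" using B(2) onorm_pos_le[OF B(1)] by (simp add: mult_left_le_one_le)
    finally show "norm (B (?E x)) \<le> ?d * norm x" using Ex by linarith
    have "norm (?E (A x)) \<le> ?d * norm (A x)" by (rule onorm[OF E])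
    also have "\<dots> \<le> ?d * norm x"
    proof (rule mult_left_mono)
      show "norm (A x) \<le> norm x"
        using onorm[OF A(1), of x] A(2) onorm_pos_le[OF A(1)] by (meson mult_left_le_one_le norm_ge_zero order_trans)
    qed (rule onorm_pos_le[OF E])
    finally show "norm (?E (A x)) \<le> ?d * norm x" .
  qed
  finally show "norm (B (x - B x) - A (x - A x)) \<le> 3 * ?d * norm x" by (simp add: ac_simps)
qed

lemma onorm_id_cases: "onorm (\<lambda>x::'a::real_normed_vector. x) \<in> {0, 1}"
proof (cases "\<exists>x::'a. x \<noteq> 0")
  case True
  then obtain x :: 'a where x: "x \<noteq> 0" by blast
  have "norm x \<le> onorm (\<lambda>x::'a. x) * norm x" using onorm[OF bounded_linear_ident, of x] by simp
  then have "1 \<le> onorm (\<lambda>x::'a. x)" using x by simp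
  then show ?thesis using onorm_id_le[where 'a='a] by simp
next
  case False
  then have "(\<lambda>x::'a. x) = (\<lambda>x. 0)" by auto
  then have "onorm (\<lambda>x::'a. x) = 0" using onorm_zero by metis
  then show ?thesis by simp
qed

lemma S0_trivial_effect:
  assumes "trivial_effect (A :: 'a::banach \<Rightarrow> 'a)"
  shows "S0 A = 0"
proof -
  obtain l where A: "A = (\<lambda>x. l *\<^sub>R x)"
    using assms unfolding trivial_effect_def by blast
  define n where "n = onorm (\<lambda>x::'a. x)"
  have onorm_scalar: "onorm (\<lambda>x::'a. s *\<^sub>R x) = \<bar>s\<bar> * n" for s
    unfolding n_def by (rule onorm_scaleR[OF bounded_linear_ident])
  have compl: "(\<lambda>x. x - A x) = (\<lambda>x. (1 - l) *\<^sub>R x)"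
    and compose: "(\<lambda>x. A (x - A x)) = (\<lambda>x. (l * (1 - l)) *\<^sub>R x)"
    using A by (auto simp: fun_eq_iff algebra_simps)
  have "S0 A = onorm A * onorm (\<lambda>x::'a. (1 - l) *\<^sub>R x) - onorm (\<lambda>x::'a. (l * (1 - l)) *\<^sub>R x)"
    unfolding S0_def compl compose by (rule refl)
  also have "\<dots> = \<bar>l\<bar> * \<bar>1 - l\<bar> * (n * n - n)"
    unfolding A onorm_scalar abs_mult by (simp add: algebra_simps)
  finally have "S0 A = \<bar>l\<bar> * \<bar>1 - l\<bar> * (n * n - n)" .
  moreover have "n * n = n" using onorm_id_cases n_def by auto
  ultimately show ?thesis by simp
qed

section \<open>Hermitian operators on a complex Hilbert space\<close>

locale complex_hilbert_space =
  fixes cscale :: "complex \<Rightarrow> 'a::banach \<Rightarrow> 'a" and cinner :: "'a \<Rightarrow> 'a \<Rightarrow> complex"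
  assumes complex_hilbert: "complex_hilbert cscale cinner"
begin

lemma cscale_add_right: "cscale a (x + y) = cscale a x + cscale a y"
  and cscale_of_real: "cscale (complex_of_real r) x = r *\<^sub>R x"
  and cinner_commute: "cinner x y = cnj (cinner y x)"
  and cinner_add_right: "cinner x (y + z) = cinner x y + cinner x z"
  and cinner_cscale_right: "cinner x (cscale a y) = a * cinner x y"
  and cinner_self: "cinner x x = complex_of_real ((norm x)\<^sup>2)"
  using complex_hilbert unfolding complex_hilbert_def by blast+

lemma cscale_diff_right: "cscale a (x - y) = cscale a x - cscale a y"
  by (metis cscale_add_right diff_add_cancel eq_diff_eq)

lemma cinner_scaleR_right: "cinner x (r *\<^sub>R y) = complex_of_real r * cinner x y"
  by (metis cinner_cscale_right cscale_of_real)

lemma cinner_add_left: "cinner (y + z) x = cinner y x + cinner z x"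
  by (metis cinner_add_right cinner_commute complex_cnj_add)

lemma cinner_scaleR_left: "cinner (r *\<^sub>R y) x = complex_of_real r * cinner y x"
  by (metis cinner_scaleR_right cinner_commute complex_cnj_mult complex_cnj_complex_of_real)

lemma cinner_diff_right: "cinner x (y - z) = cinner x y - cinner x z"
  by (metis cinner_add_right diff_add_cancel eq_diff_eq)

lemma cinner_diff_left: "cinner (y - z) x = cinner y x - cinner z x"
  by (metis cinner_add_left diff_add_cancel eq_diff_eq)

lemma cinner_zero_right: "cinner x 0 = 0"
  by (metis cinner_diff_right diff_self)

lemma Re_cinner_self: "Re (cinner x x) = (norm x)\<^sup>2"
  by (simp add: cinner_self)

lemma Re_cinner_Cauchy_Schwarz: "(Re (cinner x y))\<^sup>2 \<le> (norm x)\<^sup>2 * (norm y)\<^sup>2"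
proof -
  have "(Re (cinner x y))\<^sup>2 \<le> Re (cinner x x) * Re (cinner y y)"
  proof (rule bilinear_form_Cauchy_Schwarz[where p = "\<lambda>x y. Re (cinner x y)"])
    show "Re (cinner x y) = Re (cinner y x)" for x y by (subst cinner_commute) simp
  qed (simp_all add: cinner_add_right cinner_scaleR_right Re_cinner_self)
  then show ?thesis by (simp add: Re_cinner_self)
qed

lemma Re_cinner_le_norm_mult: "Re (cinner x y) \<le> norm x * norm y"
proof -
  have "(Re (cinner x y))\<^sup>2 \<le> (norm x * norm y)\<^sup>2"
    using Re_cinner_Cauchy_Schwarz by (simp add: power_mult_distrib)
  then have "\<bar>Re (cinner x y)\<bar> \<le> \<bar>norm x * norm y\<bar>" by (rule abs_le_square_iff[THEN iffD2])
  then show ?thesis by simp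
qed

lemma Re_cinner_le_onorm:
  assumes "bounded_linear T"
  shows "Re (cinner x (T x)) \<le> onorm T * (norm x)\<^sup>2"
proof -
  have "Re (cinner x (T x)) \<le> norm x * norm (T x)" by (rule Re_cinner_le_norm_mult)
  also have "\<dots> \<le> norm x * (onorm T * norm x)" by (simp add: mult_left_mono onorm[OF assms])
  finally show ?thesis by (simp add: power2_eq_square algebra_simps)
qed

text \<open>The norm estimates below only use real-linearity.\<close>

definition hermitian_op :: "('a \<Rightarrow> 'a) \<Rightarrow> bool" where
  "hermitian_op T \<longleftrightarrow> bounded_linear T \<and> (\<forall>x y. cinner (T x) y = cinner x (T y))"

definition positive_op :: "('a \<Rightarrow> 'a) \<Rightarrow> bool" where
  "positive_op T \<longleftrightarrow> (\<forall>x. 0 \<le> Re (cinner x (T x)))"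

lemma hermitian_op_bounded_linear: "hermitian_op T \<Longrightarrow> bounded_linear T"
  unfolding hermitian_op_def by blast

lemma hermitian_op_cinner: "hermitian_op T \<Longrightarrow> cinner (T x) y = cinner x (T y)"
  unfolding hermitian_op_def by blast

lemma hermitian_op_diff:
  assumes "hermitian_op S" "hermitian_op T"
  shows "hermitian_op (\<lambda>x. S x - T x)"
  using assms unfolding hermitian_op_def by (auto intro: bounded_linear_sub simp: cinner_diff_left cinner_diff_right)

lemma hermitian_op_scaleR: "hermitian_op (\<lambda>x. r *\<^sub>R x)"
  unfolding hermitian_op_def by (auto intro: bounded_linear_scaleR_right simp: cinner_scaleR_left cinner_scaleR_right)

lemma hermitian_op_funpow:
  assumes T: "hermitian_op T"
  shows "hermitian_op (T ^^ n)"
proof (induction n)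
  case 0
  show ?case unfolding hermitian_op_def by (simp add: bounded_linear_ident id_def)
next
  case (Suc n)
  have "bounded_linear (T \<circ> T ^^ n)"
    using bounded_linear_compose[OF hermitian_op_bounded_linear[OF T] hermitian_op_bounded_linear[OF Suc.IH]]
    by (simp add: comp_def)
  moreover have "cinner (T ((T ^^ n) x)) y = cinner x ((T ^^ n) (T y))" for x y
    by (simp add: hermitian_op_cinner[OF T] hermitian_op_cinner[OF Suc.IH])
  ultimately show ?case unfolding hermitian_op_def by (simp add: funpow_swap1)
qed

lemma hermitian_op_Cauchy_Schwarz:
  assumes T: "hermitian_op T" and pos: "positive_op T"
  shows "(Re (cinner x (T y)))\<^sup>2 \<le> Re (cinner x (T x)) * Re (cinner y (T y))"
proof (rule bilinear_form_Cauchy_Schwarz[where p = "\<lambda>x y. Re (cinner x (T y))"])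
  have bl: "bounded_linear T" by (rule hermitian_op_bounded_linear[OF T])
  show "Re (cinner x (T (y + z))) = Re (cinner x (T y)) + Re (cinner x (T z))" for x y z
    by (simp add: linear_simps bl cinner_add_right)
  show "Re (cinner x (T (r *\<^sub>R y))) = r * Re (cinner x (T y))" for r x y
    by (simp add: linear_simps bl cinner_scaleR_right)
  show "Re (cinner x (T y)) = Re (cinner y (T x))" for x y
    by (subst cinner_commute) (simp add: hermitian_op_cinner[OF T])
qed (use pos positive_op_def in blast)

lemma hermitian_op_form_square: "hermitian_op T \<Longrightarrow> Re (cinner x (T (T x))) = (norm (T x))\<^sup>2"
  by (metis hermitian_op_cinner Re_cinner_self)

text \<open>Cauchy--Schwarz for the form of \<open>T\<close> applied to \<open>x\<close> and \<open>T x\<close> gives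
  \<open>\<parallel>T x\<parallel>\<^sup>4 \<le> \<langle>x, T x\<rangle> \<langle>T x, T\<^sup>2 x\<rangle>\<close>.\<close>

lemma positive_hermitian_norm_sq_le:
  assumes T: "hermitian_op T" and pos: "positive_op T"
    and K: "\<And>x. Re (cinner x (T x)) \<le> K * (norm x)\<^sup>2" and K0: "0 \<le> K"
  shows "(norm (T x))\<^sup>2 \<le> K * Re (cinner x (T x))"
proof (cases "T x = 0")
  case True
  then show ?thesis by (simp add: cinner_zero_right)
next
  case False
  let ?y = "T x"
  have "(norm ?y)\<^sup>2 * (norm ?y)\<^sup>2 = (Re (cinner x (T ?y)))\<^sup>2"
    by (simp add: hermitian_op_form_square[OF T] power2_eq_square)
  also have "\<dots> \<le> Re (cinner x (T x)) * Re (cinner ?y (T ?y))"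
    by (rule hermitian_op_Cauchy_Schwarz[OF T pos])
  also have "\<dots> \<le> Re (cinner x (T x)) * (K * (norm ?y)\<^sup>2)"
    using pos K[of ?y] unfolding positive_op_def by (simp add: mult_left_mono)
  finally have "(norm ?y)\<^sup>2 * (norm ?y)\<^sup>2 \<le> (K * Re (cinner x (T x))) * (norm ?y)\<^sup>2"
    by (simp add: ac_simps)
  then show ?thesis by (rule mult_right_le_imp_le) (use False in simp)
qed

lemma positive_hermitian_onorm_le:
  assumes T: "hermitian_op T" and pos: "positive_op T"
    and K: "\<And>x. Re (cinner x (T x)) \<le> K * (norm x)\<^sup>2" and K0: "0 \<le> K"
  shows "onorm T \<le> K"
proof (rule onorm_bound[OF K0])
  fix x
  have "(norm (T x))\<^sup>2 \<le> K * (K * (norm x)\<^sup>2)"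
    using positive_hermitian_norm_sq_le[OF assms] K[of x] K0 by (meson mult_left_mono order_trans)
  also have "\<dots> = (K * norm x)\<^sup>2" by (simp add: power2_eq_square)
  finally show "norm (T x) \<le> K * norm x" using K0 by (meson norm_ge_zero power2_le_imp_le mult_nonneg_nonneg)
qed

lemma hermitian_op_eq_zero_if_form_zero:
  assumes T: "hermitian_op T" and form: "\<And>x. Re (cinner x (T x)) = 0"
  shows "T = (\<lambda>x. 0)"
proof -
  have "onorm T \<le> 0"
    using T form by (intro positive_hermitian_onorm_le) (simp_all add: positive_op_def)
  then have "onorm T = 0" using onorm_pos_le[OF hermitian_op_bounded_linear[OF T]] by simp
  then show ?thesis using onorm_eq_0[OF hermitian_op_bounded_linear[OF T]] by auto
qed

lemma onorm_hermitian_self_compose: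
  assumes X: "hermitian_op X"
  shows "onorm (X \<circ> X) = (onorm X)\<^sup>2"
proof (rule antisym)
  have bl: "bounded_linear X" by (rule hermitian_op_bounded_linear[OF X])
  have bl2: "bounded_linear (X \<circ> X)" using bounded_linear_compose[OF bl bl] by (simp add: comp_def)
  show "onorm (X \<circ> X) \<le> (onorm X)\<^sup>2"
    using onorm_compose[OF bl bl] by (simp add: power2_eq_square)
  let ?o = "onorm (X \<circ> X)"
  have o0: "0 \<le> ?o" by (rule onorm_pos_le[OF bl2])
  have "norm (X x) \<le> sqrt ?o * norm x" for x
  proof -
    have "(norm (X x))\<^sup>2 = Re (cinner x (X (X x)))" by (simp add: hermitian_op_form_square[OF X])
    also have "\<dots> \<le> norm x * norm (X (X x))" by (rule Re_cinner_le_norm_mult)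
    also have "\<dots> \<le> norm x * (?o * norm x)"
      using onorm[OF bl2, of x] by (simp add: mult_left_mono)
    also have "\<dots> = (sqrt ?o * norm x)\<^sup>2" using o0 by (simp add: power_mult_distrib power2_eq_square)
    finally show ?thesis using o0 by (meson power2_le_imp_le mult_nonneg_nonneg real_sqrt_ge_zero norm_ge_zero)
  qed
  then have "onorm X \<le> sqrt ?o" by (intro onorm_bound) (auto simp: o0)
  then have "(onorm X)\<^sup>2 \<le> (sqrt ?o)\<^sup>2" using onorm_pos_le[OF bl] by (simp add: power_mono)
  then show "(onorm X)\<^sup>2 \<le> ?o" using o0 by simp
qed

lemma onorm_hermitian_funpow_two_pow:
  assumes X: "hermitian_op X"
  shows "onorm (X ^^ (2 ^ k)) = onorm X ^ (2 ^ k)"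
proof (induction k)
  case (Suc k)
  have "X ^^ (2 ^ Suc k) = X ^^ (2 ^ k) \<circ> X ^^ (2 ^ k)"
    by (simp add: funpow_add[symmetric] mult_2)
  then have "onorm (X ^^ (2 ^ Suc k)) = (onorm X ^ (2 ^ k))\<^sup>2"
    using onorm_hermitian_self_compose[OF hermitian_op_funpow[OF X]] Suc.IH by simp
  then show ?case by (simp add: power_mult[symmetric] mult.commute)
qed simp

text \<open>As \<open>\<parallel>X^(2^k)\<parallel> = \<parallel>X\<parallel>^(2^k)\<close> for hermitian \<open>X\<close>, the bound
  \<open>\<parallel>(C X D)^(2^k)\<parallel> \<le> \<parallel>C\<parallel> \<parallel>D\<parallel> \<parallel>X\<parallel>^(2^k)\<close> survives taking \<open>2^k\<close>-th roots.\<close>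

lemma onorm_hermitian_similar_le:
  assumes X: "hermitian_op X" and Y: "hermitian_op (C \<circ> X \<circ> D)"
    and C: "bounded_linear C" and D: "bounded_linear D" and CD: "C \<circ> D = id" "D \<circ> C = id"
  shows "onorm (C \<circ> X \<circ> D) \<le> onorm X"
proof (rule le_if_pow_two_pow_le)
  show "0 \<le> onorm X" by (rule onorm_pos_le[OF hermitian_op_bounded_linear[OF X]])
  fix k :: nat
  let ?Xk = "X ^^ (2 ^ k)"
  have Xk: "bounded_linear ?Xk" by (rule hermitian_op_bounded_linear[OF hermitian_op_funpow[OF X]])
  have XkD: "bounded_linear (?Xk \<circ> D)" using bounded_linear_compose[OF Xk D] by (simp add: comp_def)
  have "onorm (C \<circ> X \<circ> D) ^ (2 ^ k) = onorm (C \<circ> (?Xk \<circ> D))"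
    using onorm_hermitian_funpow_two_pow[OF Y] funpow_conjugate[OF CD] by (simp add: comp_assoc)
  also have "\<dots> \<le> onorm C * onorm (?Xk \<circ> D)" by (rule onorm_compose[OF C XkD])
  also have "\<dots> \<le> onorm C * (onorm ?Xk * onorm D)"
    using onorm_compose[OF Xk D] onorm_pos_le[OF C] by (rule mult_left_mono)
  also have "\<dots> = onorm C * onorm D * onorm X ^ (2 ^ k)"
    by (simp add: onorm_hermitian_funpow_two_pow[OF X])
  finally show "onorm (C \<circ> X \<circ> D) ^ (2 ^ k) \<le> onorm C * onorm D * onorm X ^ (2 ^ k)" .
qed

lemma onorm_hermitian_similar:
  assumes X: "hermitian_op X" and Y: "hermitian_op (C \<circ> X \<circ> D)"
    and C: "bounded_linear C" and D: "bounded_linear D" and CD: "C \<circ> D = id" "D \<circ> C = id"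
  shows "onorm (C \<circ> X \<circ> D) = onorm X"
proof (rule antisym)
  show "onorm (C \<circ> X \<circ> D) \<le> onorm X" by (rule onorm_hermitian_similar_le[OF assms])
  have "D (C y) = y" for y using fun_cong[OF CD(2)] by simp
  then have "X = D \<circ> (C \<circ> X \<circ> D) \<circ> C" by (simp add: fun_eq_iff)
  then show "onorm X \<le> onorm (C \<circ> X \<circ> D)"
    using onorm_hermitian_similar_le[OF Y _ D C CD(2) CD(1)] X by simp
qed

section \<open>Effects\<close>

lemma effect_hermitian: "A \<in> effects cscale cinner \<Longrightarrow> hermitian_op A"
  unfolding effects_def selfadjoint_op_def bounded_op_def hermitian_op_def by auto

lemma effect_bounded_linear: "A \<in> effects cscale cinner \<Longrightarrow> bounded_linear A"
  by (rule hermitian_op_bounded_linear[OF effect_hermitian])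

lemma effect_positive: "A \<in> effects cscale cinner \<Longrightarrow> positive_op A"
  unfolding effects_def positive_op_def by auto

lemma effect_form_le: "A \<in> effects cscale cinner \<Longrightarrow> Re (cinner x (A x)) \<le> (norm x)\<^sup>2"
  unfolding effects_def by (auto simp: Re_cinner_self)

lemma effect_compl:
  assumes A: "A \<in> effects cscale cinner"
  shows "(\<lambda>x. x - A x) \<in> effects cscale cinner"
proof -
  have "bounded_op cscale A" and sym: "\<And>x y. cinner (A x) y = cinner x (A y)"
    using A unfolding effects_def selfadjoint_op_def by auto
  then have "bounded_op cscale (\<lambda>x. x - A x)"
    unfolding bounded_op_def by (auto intro: bounded_linear_sub bounded_linear_ident simp: cscale_diff_right)
  moreover have "cinner (x - A x) y = cinner x (y - A y)" for x y
    by (simp add: cinner_diff_left cinner_diff_right sym)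
  moreover have "Re (cinner x (x - A x)) = (norm x)\<^sup>2 - Re (cinner x (A x))" for x
    by (simp add: cinner_diff_right Re_cinner_self)
  ultimately show ?thesis
    using effect_form_le[OF A] effect_positive[OF A]
    unfolding effects_def selfadjoint_op_def positive_op_def by (auto simp: Re_cinner_self)
qed

lemma effect_onorm_le_one: "A \<in> effects cscale cinner \<Longrightarrow> onorm A \<le> 1"
  by (rule positive_hermitian_onorm_le) (simp_all add: effect_hermitian effect_positive effect_form_le)

lemma effect_norm_sq_le_form: "A \<in> effects cscale cinner \<Longrightarrow> (norm (A x))\<^sup>2 \<le> Re (cinner x (A x))"
  using positive_hermitian_norm_sq_le[of A 1] by (simp add: effect_hermitian effect_positive effect_form_le)

lemma effect_compl_compose_form:
  "A \<in> effects cscale cinner \<Longrightarrow> Re (cinner x (A (x - A x))) = Re (cinner x (A x)) - (norm (A x))\<^sup>2"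
  using hermitian_op_form_square[OF effect_hermitian] effect_bounded_linear
  by (simp add: linear_simps cinner_diff_right)

lemma effect_compl_compose_positive: "A \<in> effects cscale cinner \<Longrightarrow> positive_op (\<lambda>x. A (x - A x))"
  unfolding positive_op_def using effect_compl_compose_form effect_norm_sq_le_form by simp

lemma effect_compl_compose_hermitian:
  assumes A: "A \<in> effects cscale cinner"
  shows "hermitian_op (\<lambda>x. A (x - A x))"
proof -
  have "(\<lambda>x. A (x - A x)) = (\<lambda>x. A x - (A ^^ 2) x)"
    using effect_bounded_linear[OF A] by (simp add: linear_simps numeral_2_eq_2)
  then show ?thesis using hermitian_op_diff[OF effect_hermitian[OF A] hermitian_op_funpow[OF effect_hermitian[OF A]]]
    by simp
qed

lemma effect_onorm_bounds:
  assumes A: "A \<in> effects cscale cinner"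
  shows "0 \<le> onorm A" "onorm A \<le> 1" "0 \<le> onorm (\<lambda>x. x - A x)" "onorm (\<lambda>x. x - A x) \<le> 1"
  using onorm_pos_le[OF effect_bounded_linear] effect_onorm_le_one A effect_compl by blast+

lemma effect_form_bounds:
  assumes A: "A \<in> effects cscale cinner"
  shows "(1 - onorm (\<lambda>x. x - A x)) * (norm x)\<^sup>2 \<le> Re (cinner x (A x))"
    and "Re (cinner x (A x)) \<le> onorm A * (norm x)\<^sup>2"
  using Re_cinner_le_onorm[OF effect_bounded_linear[OF effect_compl[OF A]], of x]
    Re_cinner_le_onorm[OF effect_bounded_linear[OF A], of x]
  by (simp_all add: cinner_diff_right Re_cinner_self algebra_simps)

text \<open>Since \<open>\<parallel>A x\<parallel>\<^sup>2 \<ge> \<langle>x, A x\<rangle>\<^sup>2\<close> for unit \<open>x\<close>, the form of \<open>A (I - A)\<close> at \<open>x\<close> is at most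
  \<open>t - t\<^sup>2\<close> for \<open>t = \<langle>x, A x\<rangle>\<close>, a point of the numerical range of \<open>A\<close>.\<close>

lemma effect_compl_compose_form_le:
  assumes A: "A \<in> effects cscale cinner"
    and K: "\<And>t. 1 - onorm (\<lambda>x. x - A x) \<le> t \<Longrightarrow> t \<le> onorm A \<Longrightarrow> t - t\<^sup>2 \<le> K"
  shows "Re (cinner x (A (x - A x))) \<le> K * (norm x)\<^sup>2"
proof (cases "x = 0")
  case True
  then show ?thesis using effect_bounded_linear[OF A] by (simp add: linear_simps cinner_zero_right)
next
  case False
  define n q where "n = (norm x)\<^sup>2" and "q = Re (cinner x (A x))"
  have n: "0 < n" using False by (simp add: n_def)
  have "q\<^sup>2 \<le> n * (norm (A x))\<^sup>2" using Re_cinner_Cauchy_Schwarz[of x "A x"] by (simp add: n_def q_def)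
  then have cs: "q\<^sup>2 / n \<le> (norm (A x))\<^sup>2" using n by (simp add: divide_le_eq mult.commute)
  have "Re (cinner x (A (x - A x))) = q - (norm (A x))\<^sup>2"
    unfolding q_def by (rule effect_compl_compose_form[OF A])
  also have "\<dots> \<le> n * (q / n - (q / n)\<^sup>2)" using cs n by (simp add: field_simps power2_eq_square)
  also have "\<dots> \<le> n * K"
  proof (intro mult_left_mono K)
    show "1 - onorm (\<lambda>x. x - A x) \<le> q / n"
      using effect_form_bounds(1)[OF A, of x] n by (simp add: le_divide_eq n_def q_def)
    show "q / n \<le> onorm A"
      using effect_form_bounds(2)[OF A, of x] n by (simp add: divide_le_eq n_def q_def)
  qed (use n in simp)
  finally show ?thesis by (simp add: n_def mult.commute)
qed

lemma effect_eq_scalar_if_onorm_sum_le_one: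
  assumes A: "A \<in> effects cscale cinner" and le: "onorm A + onorm (\<lambda>x. x - A x) \<le> 1"
  shows "A = (\<lambda>x. onorm A *\<^sub>R x)"
proof -
  have "Re (cinner x (A x - onorm A *\<^sub>R x)) = 0" for x
  proof -
    have "onorm A * (norm x)\<^sup>2 \<le> (1 - onorm (\<lambda>x. x - A x)) * (norm x)\<^sup>2"
      using le by (intro mult_right_mono) auto
    then show ?thesis using effect_form_bounds[OF A, of x]
      by (simp add: cinner_diff_right cinner_scaleR_right Re_cinner_self)
  qed
  then have "(\<lambda>x. A x - onorm A *\<^sub>R x) = (\<lambda>x. 0)"
    by (intro hermitian_op_eq_zero_if_form_zero hermitian_op_diff effect_hermitian[OF A] hermitian_op_scaleR)
  then show ?thesis by (metis eq_iff_diff_eq_0)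
qed

lemma effect_onorm_compl_compose_lt:
  assumes A: "A \<in> effects cscale cinner" and gt: "1 < onorm A + onorm (\<lambda>x. x - A x)"
  shows "onorm (\<lambda>x. A (x - A x)) < onorm A * onorm (\<lambda>x. x - A x)"
proof -
  define a b where "a = onorm A" and "b = onorm (\<lambda>x. x - A x)"
  have a1: "a \<le> 1" and b1: "b \<le> 1" using effect_onorm_bounds[OF A] by (simp_all add: a_def b_def)
  obtain d where d: "0 < d" and gap: "\<And>t. 1 - b \<le> t \<Longrightarrow> t \<le> a \<Longrightarrow> t - t\<^sup>2 \<le> a * b - d"
    using parabola_uniform_gap[of "1 - b" a] gt a1 b1 by (auto simp: a_def b_def)
  have "onorm (\<lambda>x. A (x - A x)) \<le> max 0 (a * b - d)"
  proof (rule positive_hermitian_onorm_le[OF effect_compl_compose_hermitian[OF A] effect_compl_compose_positive[OF A]])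
    fix x
    have "Re (cinner x (A (x - A x))) \<le> (a * b - d) * (norm x)\<^sup>2"
      using gap by (intro effect_compl_compose_form_le[OF A]) (simp_all add: a_def b_def)
    then show "Re (cinner x (A (x - A x))) \<le> max 0 (a * b - d) * (norm x)\<^sup>2"
      by (meson max.cobounded2 mult_right_mono order_trans zero_le_power2)
  qed simp
  moreover have "0 < a * b" using gt a1 b1 by (simp add: a_def b_def)
  ultimately show ?thesis using d by (simp add: a_def b_def)
qed

section \<open>The sharpness measure \<open>S0\<close>\<close>

lemma S0_nonneg: "A \<in> effects cscale cinner \<Longrightarrow> 0 \<le> S0 A"
  using onorm_compose[OF effect_bounded_linear effect_bounded_linear[OF effect_compl]]
  unfolding S0_def by (simp add: comp_def)

lemma S0_le_one:
  assumes A: "A \<in> effects cscale cinner"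
  shows "S0 A \<le> 1"
proof -
  have "onorm A * onorm (\<lambda>x. x - A x) \<le> 1 * 1"
    using effect_onorm_bounds[OF A] by (intro mult_mono) auto
  moreover have "0 \<le> onorm (\<lambda>x. A (x - A x))"
    by (rule onorm_pos_le[OF hermitian_op_bounded_linear[OF effect_compl_compose_hermitian[OF A]]])
  ultimately show ?thesis unfolding S0_def by simp
qed

lemma S0_eq_zero_iff:
  assumes A: "A \<in> effects cscale cinner"
  shows "S0 A = 0 \<longleftrightarrow> trivial_effect A"
proof
  assume S: "S0 A = 0"
  show "trivial_effect A"
  proof (cases "onorm A + onorm (\<lambda>x. x - A x) \<le> 1")
    case True
    then show ?thesis using effect_eq_scalar_if_onorm_sum_le_one[OF A] effect_onorm_bounds[OF A]
      unfolding trivial_effect_def by blast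
  next
    case False
    then show ?thesis using effect_onorm_compl_compose_lt[OF A] S unfolding S0_def by simp
  qed
qed (rule S0_trivial_effect)

lemma S0_eq_one_iff:
  assumes A: "A \<in> effects cscale cinner"
  shows "S0 A = 1 \<longleftrightarrow> nontrivial_projection cscale cinner A"
proof -
  have bl: "bounded_linear A" by (rule effect_bounded_linear[OF A])
  have blQ: "bounded_linear (\<lambda>x. A (x - A x))"
    by (rule hermitian_op_bounded_linear[OF effect_compl_compose_hermitian[OF A]])
  define a b c where "a = onorm A" and "b = onorm (\<lambda>x. x - A x)" and "c = onorm (\<lambda>x. A (x - A x))"
  have ab: "0 \<le> a" "a \<le> 1" "0 \<le> b" "b \<le> 1" using effect_onorm_bounds[OF A] by (simp_all add: a_def b_def)
  have c0: "0 \<le> c" unfolding c_def by (rule onorm_pos_le[OF blQ])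
  have S: "S0 A = a * b - c" unfolding S0_def a_def b_def c_def by simp
  have idem_iff: "A \<circ> A = A \<longleftrightarrow> c = 0"
    unfolding c_def onorm_eq_0[OF blQ] using bl by (auto simp: fun_eq_iff linear_simps)
  show ?thesis
  proof
    assume "S0 A = 1"
    then have "a = 1" "b = 1" "c = 0" using S ab c0 mult_left_le[of b a] mult_left_le_one_le[of b a] by linarith+
    moreover have "A \<noteq> (\<lambda>x. 0)" "A \<noteq> id"
      using \<open>a = 1\<close> \<open>b = 1\<close> unfolding a_def b_def by (auto simp: onorm_zero)
    ultimately show "nontrivial_projection cscale cinner A"
      using A idem_iff unfolding nontrivial_projection_def effects_def by blast
  next
    assume P: "nontrivial_projection cscale cinner A"
    then have AA: "A \<circ> A = A" and nonzero: "A \<noteq> (\<lambda>x. 0)" "A \<noteq> id"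
      unfolding nontrivial_projection_def by auto
    have "(\<lambda>x. x - A x) \<circ> (\<lambda>x. x - A x) = (\<lambda>x. x - A x)"
      using AA bl by (auto simp: fun_eq_iff linear_simps)
    moreover have "(\<lambda>x. x - A x) \<noteq> (\<lambda>x. 0)"
    proof
      assume "(\<lambda>x. x - A x) = (\<lambda>x. 0)"
      then have "\<forall>x. A x = x" by (simp add: fun_eq_iff)
      then show False using nonzero(2) by (simp add: eq_id_iff)
    qed
    ultimately have "1 \<le> b" unfolding b_def
      by (intro onorm_idempotent_ge_one bounded_linear_sub bounded_linear_ident bl)
    moreover have "1 \<le> a" unfolding a_def by (rule onorm_idempotent_ge_one[OF bl AA nonzero(1)])
    ultimately show "S0 A = 1" using S idem_iff AA ab by simp
  qed
qed

lemma S0_compl: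
  assumes A: "A \<in> effects cscale cinner"
  shows "S0 (\<lambda>x. x - A x) = S0 A"
proof -
  have "(\<lambda>x. (x - (x - A x)) - A (x - (x - A x))) = (\<lambda>x. A (x - A x))"
    using effect_bounded_linear[OF A] by (auto simp: fun_eq_iff linear_simps)
  then show ?thesis unfolding S0_def by (simp add: mult.commute)
qed

lemma S0_similar:
  assumes A: "A \<in> effects cscale cinner" and CD: "invertible_op cscale C D"
    and B: "C \<circ> A \<circ> D \<in> effects cscale cinner"
  shows "S0 (C \<circ> A \<circ> D) = S0 A"
proof -
  have C: "bounded_linear C" and D: "bounded_linear D" and cd: "C \<circ> D = id" and dc: "D \<circ> C = id"
    using CD unfolding invertible_op_def bounded_op_def by auto
  have cdx: "C (D x) = x" and dcx: "D (C x) = x" for x using fun_cong[OF cd] fun_cong[OF dc] by auto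
  let ?B = "C \<circ> A \<circ> D"
  have compl: "(\<lambda>x. x - ?B x) = C \<circ> (\<lambda>x. x - A x) \<circ> D"
    using C by (auto simp: fun_eq_iff linear_simps cdx)
  have compose: "(\<lambda>x. ?B (x - ?B x)) = C \<circ> (\<lambda>x. A (x - A x)) \<circ> D"
    using D by (auto simp: fun_eq_iff linear_simps dcx)
  have "onorm ?B = onorm A"
    by (rule onorm_hermitian_similar[OF effect_hermitian[OF A] effect_hermitian[OF B] C D cd dc])
  moreover have "onorm (\<lambda>x. x - ?B x) = onorm (\<lambda>x. x - A x)"
    using onorm_hermitian_similar[OF effect_hermitian[OF effect_compl[OF A]] _ C D cd dc]
      effect_hermitian[OF effect_compl[OF B]]
    unfolding compl by simp
  moreover have "onorm (\<lambda>x. ?B (x - ?B x)) = onorm (\<lambda>x. A (x - A x))"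
    using onorm_hermitian_similar[OF effect_compl_compose_hermitian[OF A] _ C D cd dc]
      effect_compl_compose_hermitian[OF B]
    unfolding compose by simp
  ultimately show ?thesis unfolding S0_def by simp
qed

lemma S0_lipschitz:
  assumes A: "A \<in> effects cscale cinner" and B: "B \<in> effects cscale cinner"
  shows "\<bar>S0 B - S0 A\<bar> \<le> 5 * onorm (\<lambda>x. B x - A x)"
proof -
  have blA: "bounded_linear A" and blB: "bounded_linear B"
    using A B by (simp_all add: effect_bounded_linear)
  have blA': "bounded_linear (\<lambda>x. x - A x)" and blB': "bounded_linear (\<lambda>x. x - B x)"
    using A B by (simp_all add: effect_bounded_linear effect_compl)
  define d where "d = onorm (\<lambda>x. B x - A x)"
  have d_compl: "onorm (\<lambda>x. (x - B x) - (x - A x)) = d"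
    using onorm_neg[of "\<lambda>x. B x - A x"] by (simp add: d_def)
  have a: "\<bar>onorm B - onorm A\<bar> \<le> d"
    unfolding d_def by (rule abs_onorm_diff_le[OF blB blA])
  have b: "\<bar>onorm (\<lambda>x. x - B x) - onorm (\<lambda>x. x - A x)\<bar> \<le> d"
    using abs_onorm_diff_le[OF blB' blA'] d_compl by simp
  have c: "\<bar>onorm (\<lambda>x. B (x - B x)) - onorm (\<lambda>x. A (x - A x))\<bar> \<le> 3 * d"
    using abs_onorm_diff_le[OF bounded_linear_compose[OF blB blB'] bounded_linear_compose[OF blA blA']]
      onorm_compl_compose_diff_le[OF blA effect_onorm_le_one[OF A] blB effect_onorm_le_one[OF B]]
    unfolding d_def by linarith
  define aA aB bA bB where "aA = onorm A" and "aB = onorm B"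
    and "bA = onorm (\<lambda>x. x - A x)" and "bB = onorm (\<lambda>x. x - B x)"
  have bounds: "0 \<le> aA" "aA \<le> 1" "0 \<le> bB" "bB \<le> 1"
    using effect_onorm_bounds[OF A] effect_onorm_bounds[OF B] by (simp_all add: aA_def bB_def)
  have "\<bar>aB * bB - aA * bA\<bar> = \<bar>(aB - aA) * bB + aA * (bB - bA)\<bar>" by (simp add: algebra_simps)
  also have "\<dots> \<le> \<bar>(aB - aA) * bB\<bar> + \<bar>aA * (bB - bA)\<bar>" by (rule abs_triangle_ineq)
  also have "\<dots> = \<bar>aB - aA\<bar> * bB + aA * \<bar>bB - bA\<bar>" using bounds by (simp add: abs_mult)
  also have "\<dots> \<le> d * 1 + 1 * d"
    using a b bounds unfolding aA_def aB_def bA_def bB_def by (intro add_mono mult_mono) auto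
  finally show ?thesis using c unfolding S0_def aA_def aB_def bA_def bB_def d_def by linarith
qed

theorem S0_sharpness_measure: "sharpness_measure cscale cinner S0"
  unfolding sharpness_measure_def
proof (intro conjI ballI allI impI)
  fix A assume A: "A \<in> effects cscale cinner"
  show "0 \<le> S0 A" "S0 A \<le> 1" using S0_nonneg[OF A] S0_le_one[OF A] .
  show "S0 A = 0 \<longleftrightarrow> trivial_effect A" by (rule S0_eq_zero_iff[OF A])
  show "S0 A = 1 \<longleftrightarrow> nontrivial_projection cscale cinner A" by (rule S0_eq_one_iff[OF A])
  show "S0 (\<lambda>x. x - A x) = S0 A" by (rule S0_compl[OF A])
  fix C D assume "invertible_op cscale C D \<and> C \<circ> A \<circ> D \<in> effects cscale cinner"
  then show "S0 (C \<circ> A \<circ> D) = S0 A" using S0_similar[OF A] by blast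
next
  fix A and e :: real assume A: "A \<in> effects cscale cinner" and e: "0 < e"
  show "\<exists>d>0. \<forall>B\<in>effects cscale cinner. onorm (\<lambda>x. B x - A x) < d \<longrightarrow> \<bar>S0 B - S0 A\<bar> < e"
    using e S0_lipschitz[OF A] by (intro exI[of _ "e / 5"]) force
qed

end

theorem mainTheorem2:
  fixes cscale :: "complex \<Rightarrow> 'a::banach \<Rightarrow> 'a" and cinner :: "'a \<Rightarrow> 'a \<Rightarrow> complex"
  assumes "complex_hilbert cscale cinner"
    and "separable_space TYPE('a)"
  shows "sharpness_measure cscale cinner S0"
proof -
  interpret complex_hilbert_space cscale cinner by standard (rule assms(1))
  show ?thesis by (rule S0_sharpness_measure)
qed

end
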